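(* Let $\lambda$ be a partition of length $r$, $\mu\subset\lambda$ a partition with at most $r$ parts, and $f=(f_1,\dots,f_r)\in\mathbb{Z}_{\ge0}^r$, and assume $\lambda_i-i-f_i\ge\lambda_j-j-f_j$ for all $1\le i<j\le r$. Then \[ \widetilde s_{\lambda/\mu,f}(z|\mathbf b)=\det\left(e^{[f_i|\lambda_i-\mu_j+j-i-f_i-1]}_{\lambda_i-\mu_j+j-i}(z|\tau^{j-\mu_j-1}\mathbf b)\right)_{1\le i,j\le r}. \]
   Context: $\mathbf b=(b_i)_{i\in\mathbb{Z}}$ are independent variables, $z=(z_i)_{i\ge1}$; $\tau^k\mathbf b=(b_{1+k},b_{2+k},\dots)$. For a sequence $y$ and $k\in\mathbb{Z}$, $e^{[k]}_u(y)=\prod_{i=1}^k(1+y_iu)$ ($k\ge0$), $\prod_{i=1}^{|k|}(1-y_iu)^{-1}$ ($k\le0$); $e^{[k|\ell]}_m(z|y)=[u^m]e^{[k]}_u(z)e^{[\ell]}_u(y)$, which is $0$ for $m<0$. A row-strict tableau of $(\lambda/\mu,f)$ fills each box $(i,j)$ with $\mu_i<j\le\lambda_i$ by a positive integer, strictly increasing from left to right along rows, weakly increasing from top to bottom along columns, with all entries of row $i$ at most $f_i$. $\widetilde s_{\lambda/\mu,f}(z|\mathbf b)=\sum_T\prod_{\text{entry }e\text{ in box }(i,j)}(z_e+b_{e+i-j})$, summed over all row-strict tableaux of $(\lambda/\mu,f)$. *)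

theory Defs
  imports "Jordan_Normal_Form.Determinant" "HOL-Computational_Algebra.Formal_Power_Series"
begin

text \<open>Sequences y are functions on nat, only indices y 1, y 2, ... are used.
  For k \<le> 0 the factor (1 - y_i u)^{-1} is the geometric series sum_n y_i^n u^n.\<close>

definition geom_fps :: "'a::comm_ring_1 \<Rightarrow> 'a fps" where
  "geom_fps c = Abs_fps (\<lambda>n. c ^ n)"

definition e_gen :: "(nat \<Rightarrow> 'a::comm_ring_1) \<Rightarrow> int \<Rightarrow> 'a fps" where
  "e_gen y k = (if k \<ge> 0 then (\<Prod>i\<in>{1..nat k}. 1 + fps_const (y i) * fps_X)
                else (\<Prod>i\<in>{1..nat (- k)}. geom_fps (y i)))"

definition e_kl :: "int \<Rightarrow> int \<Rightarrow> int \<Rightarrow> (nat \<Rightarrow> 'a::comm_ring_1) \<Rightarrow> (nat \<Rightarrow> 'a) \<Rightarrow> 'a" where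
  "e_kl k l m z y = (if m < 0 then 0 else fps_nth (e_gen z k * e_gen y l) (nat m))"

definition tau :: "int \<Rightarrow> (int \<Rightarrow> 'a) \<Rightarrow> nat \<Rightarrow> 'a" where
  "tau k b = (\<lambda>i. b (int i + k))"

text \<open>Partitions as functions nat => nat, parts indexed from 1.\<close>
definition is_partition_len :: "(nat \<Rightarrow> nat) \<Rightarrow> nat \<Rightarrow> bool" where
  "is_partition_len lam r \<longleftrightarrow> (\<forall>i\<ge>1. lam (Suc i) \<le> lam i) \<and>
     (\<forall>i. 1 \<le> i \<and> i \<le> r \<longrightarrow> lam i > 0) \<and> (\<forall>i>r. lam i = 0)"

definition is_partition_atmost :: "(nat \<Rightarrow> nat) \<Rightarrow> nat \<Rightarrow> bool" where
  "is_partition_atmost mu r \<longleftrightarrow> (\<forall>i\<ge>1. mu (Suc i) \<le> mu i) \<and> (\<forall>i>r. mu i = 0)"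

definition skew_boxes :: "(nat \<Rightarrow> nat) \<Rightarrow> (nat \<Rightarrow> nat) \<Rightarrow> (nat \<times> nat) set" where
  "skew_boxes lam mu = {(i, j). 1 \<le> i \<and> mu i < j \<and> j \<le> lam i}"

definition row_strict_tableaux ::
  "(nat \<Rightarrow> nat) \<Rightarrow> (nat \<Rightarrow> nat) \<Rightarrow> (nat \<Rightarrow> nat) \<Rightarrow> (nat \<times> nat \<Rightarrow> nat) set" where
  "row_strict_tableaux lam mu f = {T.
     (\<forall>p. p \<notin> skew_boxes lam mu \<longrightarrow> T p = 0) \<and>
     (\<forall>(i, j)\<in>skew_boxes lam mu. 1 \<le> T (i, j) \<and> T (i, j) \<le> f i) \<and>
     (\<forall>i j. (i, j) \<in> skew_boxes lam mu \<and> (i, Suc j) \<in> skew_boxes lam mu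
            \<longrightarrow> T (i, j) < T (i, Suc j)) \<and>
     (\<forall>i j. (i, j) \<in> skew_boxes lam mu \<and> (Suc i, j) \<in> skew_boxes lam mu
            \<longrightarrow> T (i, j) \<le> T (Suc i, j))}"

definition s_tilde ::
  "(nat \<Rightarrow> nat) \<Rightarrow> (nat \<Rightarrow> nat) \<Rightarrow> (nat \<Rightarrow> nat) \<Rightarrow> (nat \<Rightarrow> 'a::comm_ring_1) \<Rightarrow> (int \<Rightarrow> 'a) \<Rightarrow> 'a" where
  "s_tilde lam mu f z b = (\<Sum>T\<in>row_strict_tableaux lam mu f.
      \<Prod>(i, j)\<in>skew_boxes lam mu. z (T (i, j)) + b (int (T (i, j)) + int i - int j))"

end

theory Submission
  imports Defs "HOL-Computational_Algebra.Polynomial_FPS"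
begin

text \<open>
  Induction on \<open>f 1 + \<dots> + f r\<close>. If all \<open>f k\<close> vanish, a tableau exists only for the empty
  shape, and the matrix is triangular with Kronecker deltas on the diagonal. Otherwise let \<open>N + 1\<close>
  be the largest \<open>f k\<close> and \<open>i\<close> the last row attaining it. Lowering \<open>f i\<close> to \<open>N\<close> loses exactly
  the tableaux with entry \<open>N + 1\<close> in the last box \<open>(i, lam i)\<close> of row \<open>i\<close>; if that box is a
  removable corner, deleting it is a bijection onto the tableaux of the shape with that box removed,
  and it multiplies the weight by \<open>z (N + 1) + b (N + 1 + i - lam i)\<close>. On the determinant side the
  entries of row \<open>i\<close> satisfy the same recursion in \<open>f i\<close>, so the determinant splits by linearity
  in that row. If row \<open>i\<close> of the skew shape is empty, or the box below \<open>(i, lam i)\<close> belongs to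
  it (then the flag condition forces \<open>f (i + 1) = N\<close>), no tableau has \<open>N + 1\<close> there, and the
  second determinant vanishes because of a zero block, resp. two equal rows.
\<close>

section \<open>Coefficients of the generating series\<close>

definition fps_coeff_int :: "'a::comm_ring_1 fps \<Rightarrow> int \<Rightarrow> 'a" where
  "fps_coeff_int F m = (if m < 0 then 0 else fps_nth F (nat m))"

lemma e_kl_eq_fps_coeff_int: "e_kl k l m z y = fps_coeff_int (e_gen z k * e_gen y l) m"
  by (simp add: e_kl_def fps_coeff_int_def)

lemma fps_coeff_int_mult_linear:
  "fps_coeff_int (F * (1 + fps_const c * fps_X)) m = fps_coeff_int F m + c * fps_coeff_int F (m - 1)"
proof -
  have "F * (1 + fps_const c * fps_X) = F + fps_const c * (fps_X * F)"
    by (simp add: algebra_simps)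
  moreover have "nat m = Suc (nat (m - 1))" if "m > 0"
    using that by simp
  ultimately show ?thesis
    by (cases "m > 0") (auto simp: fps_coeff_int_def)
qed

lemma e_gen_of_nat: "e_gen y (int n) = fps_of_poly (\<Prod>i\<in>{1..n}. [:1, y i:])"
  by (simp add: e_gen_def fps_of_poly_prod fps_of_poly_pCons algebra_simps)

lemma e_gen_Suc:
  "e_gen y (int (Suc n)) = e_gen y (int n) * (1 + fps_const (y (Suc n)) * fps_X)"
  by (simp add: e_gen_def del: of_nat_Suc)

lemma geom_fps_mult_linear: "geom_fps c * (1 - fps_const c * fps_X) = 1"
proof -
  have "geom_fps c * (1 - fps_const c * fps_X) = geom_fps c - fps_const c * (fps_X * geom_fps c)"
    by (simp add: algebra_simps)
  also have "\<dots> = 1"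
    by (rule fps_ext) (auto simp: geom_fps_def power_Suc[symmetric] simp del: power_Suc split: nat.split)
  finally show ?thesis .
qed

lemma e_gen_minus_of_nat:
  "e_gen y (- int n) = e_gen y (- int (Suc n)) * (1 - fps_const (y (Suc n)) * fps_X)"
proof -
  have "e_gen y (- int (Suc n)) = e_gen y (- int n) * geom_fps (y (Suc n))"
    by (simp add: e_gen_def nat_add_distrib del: of_nat_Suc)
  then show ?thesis
    by (simp add: mult.assoc geom_fps_mult_linear)
qed

lemma degree_prod_linear_le: "degree (\<Prod>i\<in>{1..n}. [:1, c i:]) \<le> n"
proof (induction n)
  case (Suc n)
  have "(\<Prod>i\<in>{1..Suc n}. [:1, c i:]) = [:1, c (Suc n):] * (\<Prod>i\<in>{1..n}. [:1, c i:])"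
    by (rule prod.nat_ivl_Suc') simp
  then have "degree (\<Prod>i\<in>{1..Suc n}. [:1, c i:]) \<le>
      degree [:1, c (Suc n):] + degree (\<Prod>i\<in>{1..n}. [:1, c i:])"
    by (metis degree_mult_le)
  moreover have "degree [:1, c (Suc n):] \<le> 1"
    using degree_pCons_le[of 1 "[:c (Suc n):]"] by simp
  ultimately show ?case
    using Suc.IH by linarith
qed simp

lemma e_kl_eq_0_above_degree:
  assumes "0 \<le> k" "0 \<le> l" "k + l < m"
  shows "e_kl k l m z y = 0"
proof -
  define p where "p = (\<Prod>i\<in>{1..nat k}. [:1, z i:]) * (\<Prod>i\<in>{1..nat l}. [:1, y i:])"
  have "degree p \<le> nat k + nat l"
    unfolding p_def by (intro degree_mult_le[THEN order_trans] add_mono degree_prod_linear_le)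
  then have "coeff p (nat m) = 0"
    using assms by (intro coeff_eq_0) linarith
  moreover have "e_gen z k * e_gen y l = fps_of_poly p"
    using assms e_gen_of_nat[of z "nat k"] e_gen_of_nat[of y "nat l"]
    by (simp add: p_def fps_of_poly_mult)
  ultimately show ?thesis
    using assms by (simp add: e_kl_eq_fps_coeff_int fps_coeff_int_def)
qed

text \<open>The \<open>(i, j)\<close> entry of the matrix in the theorem, with \<open>a = lam i - i\<close> and \<open>c = mu j - j\<close>.\<close>

definition jt_entry :: "(nat \<Rightarrow> 'a::comm_ring_1) \<Rightarrow> (int \<Rightarrow> 'a) \<Rightarrow> nat \<Rightarrow> int \<Rightarrow> int \<Rightarrow> 'a" where
  "jt_entry z b f a c = e_kl (int f) (a - c - int f - 1) (a - c) z (tau (- c - 1) b)"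

lemma jt_entry_eq_0_if_less: "a < c \<Longrightarrow> jt_entry z b f a c = 0"
  by (simp add: jt_entry_def e_kl_def)

lemma jt_entry_0: "jt_entry z b 0 a c = (if a = c then 1 else 0)"
proof -
  consider "a < c" | "a = c" | "c < a" by linarith
  then show ?thesis
  proof cases
    case 3
    then show ?thesis
      by (simp add: jt_entry_def e_kl_eq_0_above_degree)
  qed (simp_all add: jt_entry_eq_0_if_less jt_entry_def e_kl_def e_gen_def geom_fps_def)
qed

lemma jt_entry_Suc:
  "jt_entry z b (Suc f) a c = jt_entry z b f a c + (z (Suc f) + b (int (Suc f) - a)) * jt_entry z b f (a - 1) c"
proof (cases "a - c \<le> int f + 1")
  case True
  \<comment> \<open>Raising \<open>f\<close> multiplies the \<open>z\<close>-series by \<open>1 + z (f + 1) u\<close> and, through the second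
    index, the \<open>b\<close>-series by \<open>1 - b (f + 1 - a) u\<close>; above the degree bound everything vanishes.\<close>
  define n where "n = nat (int f + 1 - (a - c))"
  define y where "y = tau (- c - 1) b"
  define Q where "Q = e_gen z (int f) * e_gen y (- int (Suc n))"
  have "a - c - int (Suc f) - 1 = - int (Suc n)"
    using True by (simp add: n_def)
  then have "jt_entry z b (Suc f) a c = fps_coeff_int (Q * (1 + fps_const (z (Suc f)) * fps_X)) (a - c)"
    by (simp only: jt_entry_def e_kl_eq_fps_coeff_int y_def e_gen_Suc Q_def mult_ac)
  moreover have "jt_entry z b f a c = fps_coeff_int (Q * (1 + fps_const (- y (Suc n)) * fps_X)) (a - c)"
  proof -
    have "a - c - int f - 1 = - int n"
      using True by (simp add: n_def)
    then have "jt_entry z b f a c = fps_coeff_int (e_gen z (int f) * e_gen y (- int n)) (a - c)"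
      by (simp only: jt_entry_def e_kl_eq_fps_coeff_int y_def)
    then show ?thesis
      by (simp add: e_gen_minus_of_nat Q_def mult.assoc fps_const_neg[symmetric] del: fps_const_neg)
  qed
  moreover have "jt_entry z b f (a - 1) c = fps_coeff_int Q (a - c - 1)"
  proof -
    have "a - 1 - c - int f - 1 = - int (Suc n)" "a - 1 - c = a - c - 1"
      using True by (simp_all add: n_def)
    then show ?thesis
      by (simp only: jt_entry_def e_kl_eq_fps_coeff_int y_def Q_def)
  qed
  moreover have "y (Suc n) = b (int (Suc f) - a)"
    using True by (simp add: y_def tau_def n_def add_diff_eq)
  ultimately show ?thesis
    by (simp only: fps_coeff_int_mult_linear) (simp add: algebra_simps)
next
  case False
  then show ?thesis
    by (simp add: jt_entry_def e_kl_eq_0_above_degree)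
qed

section \<open>Row-strict tableaux\<close>

lemma finite_skew_boxes:
  assumes "\<forall>i>r. lam i = 0"
  shows "finite (skew_boxes lam mu)"
proof (rule finite_subset)
  show "skew_boxes lam mu \<subseteq> {1..r} \<times> {..Max (lam ` {1..r})}"
  proof clarify
    fix i j assume "(i, j) \<in> skew_boxes lam mu"
    then have i: "1 \<le> i" and j: "mu i < j" "j \<le> lam i"
      by (simp_all add: skew_boxes_def)
    have "i \<le> r"
      using assms j by (metis le_less_linear less_nat_zero_code order_less_le_trans)
    have "j \<le> Max (lam ` {1..r})"
      using j(2) by (rule order_trans) (use i \<open>i \<le> r\<close> in auto)
    then show "i \<in> {1..r} \<and> j \<in> {..Max (lam ` {1..r})}"
      using i \<open>i \<le> r\<close> unfolding atMost_iff atLeastAtMost_iff by blast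
  qed
qed simp

lemma finite_row_strict_tableaux:
  assumes "\<forall>i>r. lam i = 0"
  shows "finite (row_strict_tableaux lam mu f)"
proof -
  let ?B = "skew_boxes lam mu"
  let ?extend = "\<lambda>h p. if p \<in> ?B then h p else 0"
  have "row_strict_tableaux lam mu f \<subseteq> ?extend ` (PiE ?B (\<lambda>p. {0..f (fst p)}))"
  proof
    fix T assume T: "T \<in> row_strict_tableaux lam mu f"
    then have "T = ?extend (restrict T ?B)" and "restrict T ?B \<in> PiE ?B (\<lambda>p. {0..f (fst p)})"
      by (auto simp: row_strict_tableaux_def)
    then show "T \<in> ?extend ` (PiE ?B (\<lambda>p. {0..f (fst p)}))"
      by blast
  qed
  moreover have "finite (PiE ?B (\<lambda>p. {0..f (fst p)}))"
    using finite_skew_boxes[OF assms] by (intro finite_PiE) auto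
  ultimately show ?thesis
    by (meson finite_imageI finite_subset)
qed

lemma row_strict_tableauxD:
  assumes "T \<in> row_strict_tableaux lam mu f"
  shows "p \<notin> skew_boxes lam mu \<Longrightarrow> T p = 0"
    and "(i, j) \<in> skew_boxes lam mu \<Longrightarrow> 1 \<le> T (i, j)"
    and "(i, j) \<in> skew_boxes lam mu \<Longrightarrow> T (i, j) \<le> f i"
    and "(i, j) \<in> skew_boxes lam mu \<Longrightarrow> (i, Suc j) \<in> skew_boxes lam mu \<Longrightarrow> T (i, j) < T (i, Suc j)"
    and "(i, j) \<in> skew_boxes lam mu \<Longrightarrow> (Suc i, j) \<in> skew_boxes lam mu \<Longrightarrow> T (i, j) \<le> T (Suc i, j)"
  using assms unfolding row_strict_tableaux_def by fast+

lemma row_strict_tableauxI: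
  assumes "\<And>p. p \<notin> skew_boxes lam mu \<Longrightarrow> T p = 0"
    and "\<And>i j. (i, j) \<in> skew_boxes lam mu \<Longrightarrow> 1 \<le> T (i, j) \<and> T (i, j) \<le> f i"
    and "\<And>i j. (i, j) \<in> skew_boxes lam mu \<Longrightarrow> (i, Suc j) \<in> skew_boxes lam mu \<Longrightarrow> T (i, j) < T (i, Suc j)"
    and "\<And>i j. (i, j) \<in> skew_boxes lam mu \<Longrightarrow> (Suc i, j) \<in> skew_boxes lam mu \<Longrightarrow> T (i, j) \<le> T (Suc i, j)"
  shows "T \<in> row_strict_tableaux lam mu f"
  unfolding row_strict_tableaux_def using assms by blast

lemma row_strict_tableaux_mono:
  assumes "\<And>i. f i \<le> g i"
  shows "row_strict_tableaux lam mu f \<subseteq> row_strict_tableaux lam mu g"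
proof (intro subsetI row_strict_tableauxI)
  fix T assume T: "T \<in> row_strict_tableaux lam mu f"
  show "T (i, j) \<le> T (Suc i, j)" if "(i, j) \<in> skew_boxes lam mu" "(Suc i, j) \<in> skew_boxes lam mu" for i j
    using row_strict_tableauxD(5)[OF T that] .
  show "1 \<le> T (i, j) \<and> T (i, j) \<le> g i" if "(i, j) \<in> skew_boxes lam mu" for i j
    using row_strict_tableauxD(2,3)[OF T that] assms[of i] by linarith
qed (use row_strict_tableauxD(1,4) in blast)+

lemma row_strict_tableau_less_last:
  assumes T: "T \<in> row_strict_tableaux lam mu f" and ij: "(i, j) \<in> skew_boxes lam mu" and "j < lam i"
  shows "T (i, j) < T (i, lam i)"
proof -
  have "j \<le> lam i - 1"
    using \<open>j < lam i\<close> by simp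
  then show ?thesis
  proof (induction j rule: inc_induct)
    case base
    have "(i, lam i - 1) \<in> skew_boxes lam mu" "(i, lam i) \<in> skew_boxes lam mu" "Suc (lam i - 1) = lam i"
      using ij \<open>j < lam i\<close> by (auto simp: skew_boxes_def)
    then show ?case
      using row_strict_tableauxD(4)[OF T, of i "lam i - 1"] by simp
  next
    case (step n)
    have "(i, n) \<in> skew_boxes lam mu" "(i, Suc n) \<in> skew_boxes lam mu"
      using ij step.hyps by (auto simp: skew_boxes_def)
    then show ?case
      using row_strict_tableauxD(4)[OF T] step.IH by (meson order.strict_trans)
  qed
qed

lemma row_strict_tableau_le_last:
  assumes "T \<in> row_strict_tableaux lam mu f" and "(i, j) \<in> skew_boxes lam mu"
  shows "T (i, j) \<le> T (i, lam i)"
  using row_strict_tableau_less_last[OF assms] assms(2)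
  by (cases "j < lam i") (auto simp: skew_boxes_def)

lemma row_strict_tableaux_lower_row_bound:
  assumes "f i = Suc N"
  shows "row_strict_tableaux lam mu (f(i := N)) = {T \<in> row_strict_tableaux lam mu f. T (i, lam i) \<noteq> Suc N}"
proof
  show "row_strict_tableaux lam mu (f(i := N)) \<subseteq> {T \<in> row_strict_tableaux lam mu f. T (i, lam i) \<noteq> Suc N}"
  proof
    fix T assume T: "T \<in> row_strict_tableaux lam mu (f(i := N))"
    have "T \<in> row_strict_tableaux lam mu f"
      using T row_strict_tableaux_mono[of "f(i := N)" f] assms by fastforce
    moreover have "T (i, lam i) \<le> N"
      using row_strict_tableauxD(1)[OF T, of "(i, lam i)"] row_strict_tableauxD(3)[OF T, of i "lam i"]
      by (cases "(i, lam i) \<in> skew_boxes lam mu") auto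
    ultimately show "T \<in> {T \<in> row_strict_tableaux lam mu f. T (i, lam i) \<noteq> Suc N}"
      by simp
  qed
  show "{T \<in> row_strict_tableaux lam mu f. T (i, lam i) \<noteq> Suc N} \<subseteq> row_strict_tableaux lam mu (f(i := N))"
  proof (clarify, intro row_strict_tableauxI)
    fix T assume T: "T \<in> row_strict_tableaux lam mu f" and last: "T (i, lam i) \<noteq> Suc N"
    show "1 \<le> T (k, j) \<and> T (k, j) \<le> (f(i := N)) k" if kj: "(k, j) \<in> skew_boxes lam mu" for k j
    proof (cases "k = i")
      case True
      then have "(i, lam i) \<in> skew_boxes lam mu"
        using kj by (auto simp: skew_boxes_def)
      then have "T (i, lam i) \<le> N"
        using row_strict_tableauxD(3)[OF T] assms last by fastforce
      then show ?thesis
        using True row_strict_tableauxD(2)[OF T kj] row_strict_tableau_le_last[OF T kj] by simp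
    next
      case False
      then show ?thesis
        using row_strict_tableauxD(2,3)[OF T kj] by simp
    qed
  qed (use row_strict_tableauxD(1,4,5) in blast)+
qed

lemma skew_boxes_remove_last:
  assumes "mu i < lam i"
  shows "skew_boxes (lam(i := lam i - 1)) mu = skew_boxes lam mu - {(i, lam i)}"
  using assms by (auto simp: skew_boxes_def split: if_splits)

lemma row_strict_tableau_remove_corner:
  assumes T: "T \<in> row_strict_tableaux lam mu f" and "mu i < lam i" and last: "T (i, lam i) = Suc N"
  shows "T((i, lam i) := 0) \<in> row_strict_tableaux (lam(i := lam i - 1)) mu (f(i := N))"
proof (intro row_strict_tableauxI)
  note boxes = skew_boxes_remove_last[of mu i lam, OF \<open>mu i < lam i\<close>]
  show "(T((i, lam i) := 0)) p = 0" if "p \<notin> skew_boxes (lam(i := lam i - 1)) mu" for p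
    using that row_strict_tableauxD(1)[OF T, of p] boxes by auto
  show "1 \<le> (T((i, lam i) := 0)) (k, j) \<and> (T((i, lam i) := 0)) (k, j) \<le> (f(i := N)) k"
    if kj: "(k, j) \<in> skew_boxes (lam(i := lam i - 1)) mu" for k j
  proof -
    have kj': "(k, j) \<in> skew_boxes lam mu" "(k, j) \<noteq> (i, lam i)"
      using kj boxes by auto
    moreover have "T (i, j) < Suc N" if "k = i"
      using row_strict_tableau_less_last[OF T] kj' that last by (fastforce simp: skew_boxes_def)
    ultimately show ?thesis
      using row_strict_tableauxD(2,3)[OF T kj'(1)] by auto
  qed
qed (use row_strict_tableauxD(4,5)[OF T] skew_boxes_remove_last[of mu i lam, OF \<open>mu i < lam i\<close>] in auto)

lemma row_strict_tableau_add_corner: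
  assumes T: "T \<in> row_strict_tableaux (lam(i := lam i - 1)) mu (f(i := N))"
    and "1 \<le> i" "mu i < lam i" "lam (Suc i) < lam i" "f i = Suc N"
    and above: "\<And>k. 1 \<le> k \<Longrightarrow> k < i \<Longrightarrow> f k \<le> Suc N"
  shows "T((i, lam i) := Suc N) \<in> row_strict_tableaux lam mu f"
proof (intro row_strict_tableauxI)
  let ?T = "T((i, lam i) := Suc N)"
  have boxes: "(k, j) \<in> skew_boxes (lam(i := lam i - 1)) mu \<longleftrightarrow>
      (k, j) \<in> skew_boxes lam mu \<and> (k, j) \<noteq> (i, lam i)"
    for k j using skew_boxes_remove_last[of mu i lam] \<open>mu i < lam i\<close> by auto
  have corner: "(i, lam i) \<in> skew_boxes lam mu"
    using \<open>1 \<le> i\<close> \<open>mu i < lam i\<close> by (simp add: skew_boxes_def)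
  show "?T p = 0" if "p \<notin> skew_boxes lam mu" for p
    using that row_strict_tableauxD(1)[OF T, of p] boxes corner by (cases p) auto
  show "1 \<le> ?T (k, j) \<and> ?T (k, j) \<le> f k" if kj: "(k, j) \<in> skew_boxes lam mu" for k j
  proof (cases "(k, j) = (i, lam i)")
    case False
    then show ?thesis
      using row_strict_tableauxD(2,3)[OF T, of k j] kj boxes \<open>f i = Suc N\<close> by (auto split: if_splits)
  qed (use \<open>f i = Suc N\<close> in auto)
  show "?T (k, j) < ?T (k, Suc j)"
    if kj: "(k, j) \<in> skew_boxes lam mu" "(k, Suc j) \<in> skew_boxes lam mu" for k j
  proof (cases "(k, Suc j) = (i, lam i)")
    case True
    then have "(k, j) \<in> skew_boxes (lam(i := lam i - 1)) mu" "(k, j) \<noteq> (i, lam i)"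
      using kj boxes by auto
    then show ?thesis
      using True row_strict_tableauxD(3)[OF T, of k j] by auto
  next
    case False
    moreover have "(k, j) \<noteq> (i, lam i)"
      using kj(2) by (auto simp: skew_boxes_def)
    ultimately show ?thesis
      using row_strict_tableauxD(4)[OF T, of k j] kj boxes by auto
  qed
  show "?T (k, j) \<le> ?T (Suc k, j)"
    if kj: "(k, j) \<in> skew_boxes lam mu" "(Suc k, j) \<in> skew_boxes lam mu" for k j
  proof (cases "(Suc k, j) = (i, lam i)")
    case True
    then have "(k, j) \<in> skew_boxes (lam(i := lam i - 1)) mu" "k \<noteq> i" "1 \<le> k"
      using kj boxes by (auto simp: skew_boxes_def)
    then show ?thesis
      using True row_strict_tableauxD(3)[OF T, of k j] above[of k] by auto
  next
    case False
    moreover have "(k, j) \<noteq> (i, lam i)"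
      using kj(2) \<open>lam (Suc i) < lam i\<close> by (auto simp: skew_boxes_def)
    ultimately show ?thesis
      using row_strict_tableauxD(5)[OF T, of k j] kj boxes by auto
  qed
qed

definition tableau_weight ::
  "(nat \<Rightarrow> nat) \<Rightarrow> (nat \<Rightarrow> nat) \<Rightarrow> (nat \<Rightarrow> 'a::comm_ring_1) \<Rightarrow> (int \<Rightarrow> 'a) \<Rightarrow> (nat \<times> nat \<Rightarrow> nat) \<Rightarrow> 'a" where
  "tableau_weight lam mu z b T = (\<Prod>(i, j)\<in>skew_boxes lam mu. z (T (i, j)) + b (int (T (i, j)) + int i - int j))"

lemma s_tilde_eq_sum_tableau_weight:
  "s_tilde lam mu f z b = (\<Sum>T\<in>row_strict_tableaux lam mu f. tableau_weight lam mu z b T)"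
  by (simp add: s_tilde_def tableau_weight_def)

lemma tableau_weight_add_corner:
  assumes "finite (skew_boxes lam mu)" "1 \<le> i" "mu i < lam i"
  shows "tableau_weight lam mu z b (T((i, lam i) := v)) =
    (z v + b (int v + int i - int (lam i))) * tableau_weight (lam(i := lam i - 1)) mu z b T"
proof -
  let ?B' = "skew_boxes (lam(i := lam i - 1)) mu"
  have "skew_boxes lam mu = insert (i, lam i) ?B'" "(i, lam i) \<notin> ?B'"
    using assms skew_boxes_remove_last[of mu i lam] by (auto simp: skew_boxes_def)
  moreover have "finite ?B'"
    using assms skew_boxes_remove_last[of mu i lam] by simp
  ultimately show ?thesis
    unfolding tableau_weight_def by simp (intro arg_cong[where f="(*) _"] prod.cong refl, auto)
qed

lemma s_tilde_remove_corner:
  assumes "\<forall>k>r. lam k = 0"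
    and "1 \<le> i" "mu i < lam i" "lam (Suc i) < lam i" "f i = Suc N"
    and "\<And>k. 1 \<le> k \<Longrightarrow> k < i \<Longrightarrow> f k \<le> Suc N"
  shows "s_tilde lam mu f z b = s_tilde lam mu (f(i := N)) z b +
    (z (Suc N) + b (int (Suc N) + int i - int (lam i))) * s_tilde (lam(i := lam i - 1)) mu (f(i := N)) z b"
proof -
  let ?lam' = "lam(i := lam i - 1)" and ?f' = "f(i := N)"
  let ?add = "\<lambda>T. T((i, lam i) := Suc N)"
  have "(i, lam i) \<notin> skew_boxes ?lam' mu"
    using assms by (simp add: skew_boxes_def)
  then have inj: "inj_on ?add (row_strict_tableaux ?lam' mu ?f')"
    by (intro inj_onI) (metis fun_upd_triv fun_upd_upd row_strict_tableauxD(1))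
  have "{T \<in> row_strict_tableaux lam mu f. T (i, lam i) = Suc N} = ?add ` row_strict_tableaux ?lam' mu ?f'"
  proof (intro equalityI subsetI)
    fix T assume "T \<in> {T \<in> row_strict_tableaux lam mu f. T (i, lam i) = Suc N}"
    then have "T = ?add (T((i, lam i) := 0))" "T((i, lam i) := 0) \<in> row_strict_tableaux ?lam' mu ?f'"
      using row_strict_tableau_remove_corner[of T lam mu f i N] assms by auto
    then show "T \<in> ?add ` row_strict_tableaux ?lam' mu ?f'"
      by blast
  qed (use row_strict_tableau_add_corner[of _ lam i mu f N] assms in auto)
  then have tableaux: "row_strict_tableaux lam mu f =
      row_strict_tableaux lam mu ?f' \<union> ?add ` row_strict_tableaux ?lam' mu ?f'"
    "row_strict_tableaux lam mu ?f' \<inter> ?add ` row_strict_tableaux ?lam' mu ?f' = {}"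
    using row_strict_tableaux_lower_row_bound[of f i N lam mu] assms by auto
  have "\<forall>k>r. ?lam' k = 0"
    using assms by simp
  then have "finite (row_strict_tableaux ?lam' mu ?f')" "finite (row_strict_tableaux lam mu ?f')"
    using assms finite_row_strict_tableaux by blast+
  moreover have "tableau_weight lam mu z b (?add T) =
      (z (Suc N) + b (int (Suc N) + int i - int (lam i))) * tableau_weight ?lam' mu z b T" for T
    using tableau_weight_add_corner[of lam mu i] finite_skew_boxes[OF assms(1)] assms(2,3) by blast
  ultimately show ?thesis
    unfolding s_tilde_eq_sum_tableau_weight tableaux(1)
    using tableaux(2) inj by (simp add: sum.union_disjoint sum.reindex sum_distrib_left del: of_nat_Suc)
qed

lemma s_tilde_lower_row_bound:
  assumes "f i = Suc N" and "\<forall>T\<in>row_strict_tableaux lam mu f. T (i, lam i) \<noteq> Suc N"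
  shows "s_tilde lam mu (f(i := N)) z b = s_tilde lam mu f z b"
proof -
  have "row_strict_tableaux lam mu (f(i := N)) = row_strict_tableaux lam mu f"
    using row_strict_tableaux_lower_row_bound[of f i N lam mu] assms by auto
  then show ?thesis
    by (simp add: s_tilde_def)
qed

lemma s_tilde_lower_row_bound_if_empty_row:
  assumes "f i = Suc N" "lam i = mu i"
  shows "s_tilde lam mu (f(i := N)) z b = s_tilde lam mu f z b"
proof -
  have "(i, lam i) \<notin> skew_boxes lam mu"
    using assms(2) by (simp add: skew_boxes_def)
  then show ?thesis
    using row_strict_tableauxD(1) assms(1) by (intro s_tilde_lower_row_bound) fastforce+
qed

lemma s_tilde_lower_row_bound_if_box_below:
  assumes "f i = Suc N" "f (Suc i) = N"
    and "1 \<le> i" "mu (Suc i) \<le> mu i" "mu i < lam i" "lam (Suc i) = lam i"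
  shows "s_tilde lam mu (f(i := N)) z b = s_tilde lam mu f z b"
proof (intro s_tilde_lower_row_bound[of f i N lam mu, OF assms(1)] ballI)
  fix T assume T: "T \<in> row_strict_tableaux lam mu f"
  have "(i, lam i) \<in> skew_boxes lam mu" "(Suc i, lam i) \<in> skew_boxes lam mu"
    using assms(3-6) by (simp_all add: skew_boxes_def)
  then have "T (i, lam i) \<le> N"
    using row_strict_tableauxD(3,5)[OF T] assms(2) by (meson order_trans)
  then show "T (i, lam i) \<noteq> Suc N"
    by simp
qed

section \<open>The determinant\<close>

lemma det_row_linear:
  assumes A: "A \<in> carrier_mat n n" and B: "B \<in> carrier_mat n n" and C: "C \<in> carrier_mat n n"
    and "k < n"
    and others: "\<And>i j. i < n \<Longrightarrow> j < n \<Longrightarrow> i \<noteq> k \<Longrightarrow> A $$ (i, j) = B $$ (i, j) \<and> C $$ (i, j) = B $$ (i, j)"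
    and row: "\<And>j. j < n \<Longrightarrow> A $$ (k, j) = B $$ (k, j) + w * C $$ (k, j)"
  shows "det A = det B + w * det C"
proof -
  have "signof p * (\<Prod>i = 0..<n. A $$ (i, p i)) =
        signof p * (\<Prod>i = 0..<n. B $$ (i, p i)) + w * (signof p * (\<Prod>i = 0..<n. C $$ (i, p i)))"
    if p: "p permutes {0..<n}" for p
  proof -
    have p_lt: "p i < n" if "i < n" for i
      using p that permutes_in_image by fastforce
    let ?R = "{0..<n} - {k}"
    have "(\<Prod>i\<in>?R. A $$ (i, p i)) = (\<Prod>i\<in>?R. B $$ (i, p i))"
      "(\<Prod>i\<in>?R. C $$ (i, p i)) = (\<Prod>i\<in>?R. B $$ (i, p i))"
      by (auto intro!: prod.cong simp: others p_lt)
    moreover have "(\<Prod>i = 0..<n. M $$ (i, p i)) = M $$ (k, p k) * (\<Prod>i\<in>?R. M $$ (i, p i))" for M :: "'a mat"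
      using \<open>k < n\<close> by (intro prod.remove) auto
    ultimately show ?thesis
      using row[OF p_lt[OF \<open>k < n\<close>]] by (simp add: algebra_simps)
  qed
  then show ?thesis
    unfolding det_def'[OF A] det_def'[OF B] det_def'[OF C] by (simp add: sum.distrib sum_distrib_left)
qed

lemma det_eq_0_if_lower_left_zero_block:
  assumes A: "A \<in> carrier_mat n n" and "p < n"
    and zero: "\<And>k j. p \<le> k \<Longrightarrow> k < n \<Longrightarrow> j \<le> p \<Longrightarrow> A $$ (k, j) = 0"
  shows "det A = 0"
  unfolding det_def'[OF A]
proof (intro sum.neutral ballI)
  fix s assume "s \<in> {s. s permutes {0..<n}}"
  then have s: "s permutes {0..<n}" by simp
  have "\<exists>k\<in>{p..<n}. s k \<le> p"
  proof (rule ccontr)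
    assume "\<not> ?thesis"
    then have "s ` {p..<n} \<subseteq> {Suc p..<n}"
      using permutes_in_image[OF s] by (auto simp: not_le)
    then have "card {p..<n} \<le> card {Suc p..<n}"
      using card_inj_on_le[OF permutes_inj_on[OF s]] by blast
    then show False
      using \<open>p < n\<close> by simp
  qed
  then have "(\<Prod>i = 0..<n. A $$ (i, s i)) = 0"
    using zero by (intro prod_zero) fastforce+
  then show "signof s * (\<Prod>i = 0..<n. A $$ (i, s i)) = 0"
    by simp
qed

definition shifted_parts :: "(nat \<Rightarrow> nat) \<Rightarrow> nat \<Rightarrow> int" where
  "shifted_parts lam i = int (lam i) - int i"

definition jt_matrix ::
  "(nat \<Rightarrow> 'a::comm_ring_1) \<Rightarrow> (int \<Rightarrow> 'a) \<Rightarrow> nat \<Rightarrow> (nat \<Rightarrow> int) \<Rightarrow> (nat \<Rightarrow> nat) \<Rightarrow> (nat \<Rightarrow> int) \<Rightarrow> 'a mat" where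
  "jt_matrix z b r a f c = mat r r (\<lambda>(i, j). jt_entry z b (f (Suc i)) (a (Suc i)) (c (Suc j)))"

lemma jt_matrix_carrier: "jt_matrix z b r a f c \<in> carrier_mat r r"
  by (simp add: jt_matrix_def)

lemma det_jt_matrix_Suc:
  assumes "1 \<le> i" "i \<le> r" "f i = Suc N"
  shows "det (jt_matrix z b r a f c) = det (jt_matrix z b r a (f(i := N)) c) +
     (z (Suc N) + b (int (Suc N) - a i)) * det (jt_matrix z b r (a(i := a i - 1)) (f(i := N)) c)"
proof (rule det_row_linear[OF jt_matrix_carrier jt_matrix_carrier jt_matrix_carrier, of "i - 1"])
  show "i - 1 < r"
    using assms by simp
  show "jt_matrix z b r a f c $$ (k, j) = jt_matrix z b r a (f(i := N)) c $$ (k, j) \<and>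
      jt_matrix z b r (a(i := a i - 1)) (f(i := N)) c $$ (k, j) = jt_matrix z b r a (f(i := N)) c $$ (k, j)"
    if "k < r" "j < r" "k \<noteq> i - 1" for k j
  proof -
    have "Suc k \<noteq> i"
      using that assms by auto
    then show ?thesis
      using that by (simp add: jt_matrix_def)
  qed
  have "Suc (i - 1) = i"
    using assms by simp
  then show "jt_matrix z b r a f c $$ (i - 1, j) = jt_matrix z b r a (f(i := N)) c $$ (i - 1, j) +
      (z (Suc N) + b (int (Suc N) - a i)) * jt_matrix z b r (a(i := a i - 1)) (f(i := N)) c $$ (i - 1, j)"
    if "j < r" for j
    using that assms by (simp add: jt_matrix_def jt_entry_Suc del: of_nat_Suc)
qed

lemma det_jt_matrix_eq_0_if_equal_rows:
  assumes "1 \<le> i" "i < r" "a (Suc i) = a i - 1" "f (Suc i) = f i"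
  shows "det (jt_matrix z b r (a(i := a i - 1)) f c) = 0"
proof (rule det_identical_rows[OF jt_matrix_carrier, of "i - 1" i])
  have "Suc (i - 1) = i"
    using assms by simp
  then show "row (jt_matrix z b r (a(i := a i - 1)) f c) (i - 1) = row (jt_matrix z b r (a(i := a i - 1)) f c) i"
    using assms by (auto simp: jt_matrix_def)
qed (use assms in auto)

section \<open>Induction on the flag\<close>

lemma is_partition_atmost_antimono:
  assumes "is_partition_atmost lam r" "1 \<le> i" "i \<le> j"
  shows "lam j \<le> lam i"
  using \<open>i \<le> j\<close>
proof (induction j rule: dec_induct)
  case (step n)
  then show ?case
    using assms(1,2) unfolding is_partition_atmost_def by (meson order_trans)
qed simp

lemma is_partition_atmost_remove_corner:
  assumes "is_partition_atmost lam r" "lam (Suc i) < lam i"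
  shows "is_partition_atmost (lam(i := lam i - 1)) r"
proof -
  have "i \<le> r \<or> lam i = 0"
    using assms unfolding is_partition_atmost_def by (meson not_le)
  then have "\<forall>k>r. (lam(i := lam i - 1)) k = 0"
    using assms unfolding is_partition_atmost_def by auto
  moreover have "(lam(i := lam i - 1)) (Suc k) \<le> (lam(i := lam i - 1)) k" if "k \<ge> 1" for k
    using assms that unfolding is_partition_atmost_def by (cases "Suc k = i") auto
  ultimately show ?thesis
    unfolding is_partition_atmost_def by blast
qed

lemma s_tilde_eq_det_jt_matrix_if_flag_zero:
  assumes lam: "is_partition_atmost lam r" and mu: "is_partition_atmost mu r" and "\<forall>i. mu i \<le> lam i"
    and f0: "\<forall>k\<in>{1..r}. f k = 0"
  shows "s_tilde lam mu f z b = det (jt_matrix z b r (shifted_parts lam) f (shifted_parts mu))"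
proof -
  let ?M = "jt_matrix z b r (shifted_parts lam) f (shifted_parts mu)"
  have "det ?M = prod_list (diag_mat ?M)"
  proof (rule det_lower_triangular[OF _ jt_matrix_carrier])
    fix i j assume ij: "i < j" "j < r"
    have "mu (Suc j) \<le> mu (Suc i)"
      using is_partition_atmost_antimono[OF mu, of "Suc i" "Suc j"] ij by simp
    then have "shifted_parts mu (Suc j) < shifted_parts lam (Suc i)"
      using assms(3)[rule_format, of "Suc i"] ij by (simp add: shifted_parts_def)
    moreover have "f (Suc i) = 0"
      using f0 ij by simp
    ultimately show "?M $$ (i, j) = 0"
      using ij by (simp add: jt_matrix_def jt_entry_0)
  qed
  also have "\<dots> = (\<Prod>i = 0..<r. ?M $$ (i, i))"
    by (simp add: prod_list_diag_prod jt_matrix_def)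
  also have "\<dots> = (\<Prod>i = 0..<r. if lam (Suc i) = mu (Suc i) then 1 else 0)"
  proof (rule prod.cong)
    fix i assume "i \<in> {0..<r}"
    moreover have "f (Suc i) = 0"
      using f0 \<open>i \<in> {0..<r}\<close> by simp
    ultimately show "?M $$ (i, i) = (if lam (Suc i) = mu (Suc i) then 1 else 0)"
      by (simp add: jt_matrix_def jt_entry_0 shifted_parts_def)
  qed simp
  finally have det: "det ?M = (\<Prod>i = 0..<r. if lam (Suc i) = mu (Suc i) then 1 else 0)" .
  show ?thesis
  proof (cases "\<forall>k\<in>{1..r}. lam k = mu k")
    case True
    have "lam k = mu k" if "1 \<le> k" for k
    proof (cases "k \<le> r")
      case False
      then show ?thesis
        using lam mu unfolding is_partition_atmost_def by simp
    qed (use True that in simp)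
    then have boxes: "skew_boxes lam mu = {}"
      by (auto simp: skew_boxes_def)
    then have "row_strict_tableaux lam mu f = {\<lambda>_. 0}"
      unfolding row_strict_tableaux_def by auto
    then have "s_tilde lam mu f z b = 1"
      by (simp add: s_tilde_def boxes)
    moreover have "(\<Prod>i = 0..<r. if lam (Suc i) = mu (Suc i) then 1 else (0::'a)) = 1"
      using True by (intro prod.neutral) auto
    ultimately show ?thesis
      by (simp add: det)
  next
    case False
    then obtain k where k: "1 \<le> k" "k \<le> r" "lam k \<noteq> mu k"
      by auto
    then have "(k, lam k) \<in> skew_boxes lam mu"
      using assms(3)[rule_format, of k] by (simp add: skew_boxes_def)
    then have "T \<notin> row_strict_tableaux lam mu f" for T
      using row_strict_tableauxD(2,3)[of T lam mu f k "lam k"] f0 k(1,2) by auto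
    then have "row_strict_tableaux lam mu f = {}"
      by blast
    then have "s_tilde lam mu f z b = 0"
      by (simp add: s_tilde_def)
    moreover have "(\<Prod>i = 0..<r. if lam (Suc i) = mu (Suc i) then 1 else (0::'a)) = 0"
    proof (rule prod_zero)
      show "\<exists>i\<in>{0..<r}. (if lam (Suc i) = mu (Suc i) then 1 else (0::'a)) = 0"
        using k by (intro bexI[of _ "k - 1"]) simp_all
    qed simp
    ultimately show ?thesis
      by (simp add: det)
  qed
qed

lemma det_jt_matrix_eq_0_if_empty_row:
  assumes lam: "is_partition_atmost lam r" and mu: "is_partition_atmost mu r"
    and "1 \<le> i" "i \<le> r" "lam i = mu i"
  shows "det (jt_matrix z b r ((shifted_parts lam)(i := shifted_parts lam i - 1)) g (shifted_parts mu)) = 0"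
proof (rule det_eq_0_if_lower_left_zero_block[OF jt_matrix_carrier, of "i - 1"])
  show "i - 1 < r"
    using assms by simp
  fix k j assume kj: "i - 1 \<le> k" "k < r" "j \<le> i - 1"
  have mu_j: "mu i \<le> mu (Suc j)"
    using is_partition_atmost_antimono[OF mu, of "Suc j" i] kj \<open>1 \<le> i\<close> by simp
  have "((shifted_parts lam)(i := shifted_parts lam i - 1)) (Suc k) < shifted_parts mu (Suc j)"
  proof (cases "Suc k = i")
    case True
    then show ?thesis
      using \<open>lam i = mu i\<close> mu_j kj by (simp add: shifted_parts_def)
  next
    case False
    then have "lam (Suc k) \<le> lam i" "j < k"
      using is_partition_atmost_antimono[OF lam, of i "Suc k"] kj \<open>1 \<le> i\<close> by auto
    then show ?thesis
      using False \<open>lam i = mu i\<close> mu_j by (simp add: shifted_parts_def)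
  qed
  then show "jt_matrix z b r ((shifted_parts lam)(i := shifted_parts lam i - 1)) g (shifted_parts mu) $$ (k, j) = 0"
    using kj \<open>i \<le> r\<close> by (simp add: jt_matrix_def jt_entry_eq_0_if_less)
qed

definition flag_compatible :: "nat \<Rightarrow> (nat \<Rightarrow> nat) \<Rightarrow> (nat \<Rightarrow> nat) \<Rightarrow> bool" where
  "flag_compatible r lam f \<longleftrightarrow> (\<forall>i j. 1 \<le> i \<and> i < j \<and> j \<le> r \<longrightarrow>
     int (lam i) - int i - int (f i) \<ge> int (lam j) - int j - int (f j))"

lemma flag_compatible_lower_max:
  assumes "flag_compatible r lam f" "is_partition_atmost lam r"
    and "f i = Suc N" "\<forall>k\<in>{1..r}. f k \<le> Suc N"
  shows "flag_compatible r lam (f(i := N))"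
  unfolding flag_compatible_def
proof (intro allI impI)
  fix k j assume kj: "1 \<le> k \<and> k < j \<and> j \<le> r"
  show "int (lam k) - int k - int ((f(i := N)) k) \<ge> int (lam j) - int j - int ((f(i := N)) j)"
  proof (cases "j = i")
    case True
    have "lam i \<le> lam k" "f k \<le> Suc N"
      using is_partition_atmost_antimono[OF assms(2), of k i] assms(4) kj True by auto
    then show ?thesis
      using kj True by simp
  next
    case False
    have "int (lam j) - int j - int (f j) \<le> int (lam k) - int k - int (f k)"
      using assms(1) kj unfolding flag_compatible_def by blast
    then show ?thesis
      using False assms(3) by (cases "k = i") auto
  qed
qed

lemma flag_compatible_remove_corner:
  assumes "flag_compatible r lam f" "f i = Suc N" "0 < lam i"
  shows "flag_compatible r (lam(i := lam i - 1)) (f(i := N))"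
  unfolding flag_compatible_def
proof (intro allI impI)
  fix k j assume kj: "1 \<le> k \<and> k < j \<and> j \<le> r"
  have "int (lam j) - int j - int (f j) \<le> int (lam k) - int k - int (f k)"
    using assms(1) kj unfolding flag_compatible_def by blast
  moreover have "int (lam i - 1) = int (lam i) - 1"
    using assms(3) by simp
  ultimately show "int ((lam(i := lam i - 1)) k) - int k - int ((f(i := N)) k) \<ge>
      int ((lam(i := lam i - 1)) j) - int j - int ((f(i := N)) j)"
    using assms(2) by auto
qed

lemma flag_compatible_equal_rows:
  assumes "flag_compatible r lam f" "1 \<le> i" "Suc i \<le> r" "lam (Suc i) = lam i"
    and "f i = Suc N" "f (Suc i) \<le> Suc N" "f (Suc i) \<noteq> Suc N"
  shows "f (Suc i) = N"
  using assms(1)[unfolded flag_compatible_def, rule_format, of i "Suc i"] assms(2-7) by simp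

lemma s_tilde_eq_det_jt_matrix_step:
  assumes lam: "is_partition_atmost lam r" and mu: "is_partition_atmost mu r"
    and sub: "\<forall>k. mu k \<le> lam k" and flag: "flag_compatible r lam f"
    and i: "1 \<le> i" "i \<le> r" "f i = Suc N"
    and max: "\<forall>k\<in>{1..r}. f k \<le> Suc N" and last: "\<forall>k. i < k \<and> k \<le> r \<longrightarrow> f k \<noteq> Suc N"
    and IH: "\<And>lam'. is_partition_atmost lam' r \<Longrightarrow> \<forall>k. mu k \<le> lam' k \<Longrightarrow>
      flag_compatible r lam' (f(i := N)) \<Longrightarrow>
      s_tilde lam' mu (f(i := N)) z b = det (jt_matrix z b r (shifted_parts lam') (f(i := N)) (shifted_parts mu))"
  shows "s_tilde lam mu f z b = det (jt_matrix z b r (shifted_parts lam) f (shifted_parts mu))"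
proof -
  let ?f' = "f(i := N)" and ?a' = "(shifted_parts lam)(i := shifted_parts lam i - 1)"
  define w where "w = z (Suc N) + b (int (Suc N) + int i - int (lam i))"
  have "int (Suc N) - shifted_parts lam i = int (Suc N) + int i - int (lam i)"
    by (simp add: shifted_parts_def)
  then have split: "det (jt_matrix z b r (shifted_parts lam) f (shifted_parts mu)) =
      det (jt_matrix z b r (shifted_parts lam) ?f' (shifted_parts mu)) +
      w * det (jt_matrix z b r ?a' ?f' (shifted_parts mu))"
    using det_jt_matrix_Suc[of i r f N, OF i] unfolding w_def by metis
  have IH_lam: "s_tilde lam mu ?f' z b = det (jt_matrix z b r (shifted_parts lam) ?f' (shifted_parts mu))"
    using IH[OF lam sub flag_compatible_lower_max[OF flag lam i(3) max]] .
  consider (corner) "mu i < lam i" "lam (Suc i) < lam i" | (empty) "lam i = mu i"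
    | (box_below) "mu i < lam i" "lam (Suc i) = lam i"
    using sub[rule_format, of i] is_partition_atmost_antimono[OF lam i(1), of "Suc i"] by linarith
  then show ?thesis
  proof cases
    case corner
    let ?lam' = "lam(i := lam i - 1)"
    have "shifted_parts ?lam' = ?a'"
      using corner by (auto simp: shifted_parts_def)
    moreover have "s_tilde ?lam' mu ?f' z b = det (jt_matrix z b r (shifted_parts ?lam') ?f' (shifted_parts mu))"
      using corner sub by (intro IH is_partition_atmost_remove_corner[OF lam] flag_compatible_remove_corner[OF flag i(3)])
        (auto simp: less_Suc_eq_le)
    moreover have "s_tilde lam mu f z b = s_tilde lam mu ?f' z b + w * s_tilde ?lam' mu ?f' z b"
      unfolding w_def using lam max i corner
      by (intro s_tilde_remove_corner[where r = r]) (auto simp: is_partition_atmost_def)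
    ultimately show ?thesis
      using IH_lam split by simp
  next
    case empty
    then show ?thesis
      using IH_lam split s_tilde_lower_row_bound_if_empty_row[of f i N lam mu z b, OF i(3) empty]
        det_jt_matrix_eq_0_if_empty_row[OF lam mu i(1,2) empty, where z = z and b = b] by simp
  next
    case box_below
    have "Suc i \<le> r"
      using lam box_below unfolding is_partition_atmost_def by (metis not_le not_less_zero)
    moreover have "f (Suc i) \<le> Suc N" "f (Suc i) \<noteq> Suc N"
      using max last calculation by auto
    ultimately have f_next: "f (Suc i) = N"
      using flag_compatible_equal_rows[OF flag i(1)] box_below(2) i(3) by blast
    have "s_tilde lam mu ?f' z b = s_tilde lam mu f z b"
      using is_partition_atmost_antimono[OF mu i(1), of "Suc i"] box_below
      by (intro s_tilde_lower_row_bound_if_box_below[of f i N mu lam, OF i(3) f_next i(1)]) simp_all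
    moreover have "det (jt_matrix z b r ?a' ?f' (shifted_parts mu)) = 0"
      using \<open>Suc i \<le> r\<close> i(1) box_below f_next
      by (intro det_jt_matrix_eq_0_if_equal_rows) (auto simp: shifted_parts_def)
    ultimately show ?thesis
      using IH_lam split by simp
  qed
qed

lemma obtain_last_row_of_max:
  fixes f :: "nat \<Rightarrow> nat"
  assumes "\<exists>k\<in>{1..r}. f k \<noteq> 0"
  obtains i N where "1 \<le> i" "i \<le> r" "f i = Suc N" "\<forall>k\<in>{1..r}. f k \<le> Suc N"
    "\<forall>k. i < k \<and> k \<le> r \<longrightarrow> f k \<noteq> Suc N"
proof -
  define M where "M = Max (f ` {1..r})"
  have M: "M \<in> f ` {1..r}" "\<forall>k\<in>{1..r}. f k \<le> M"
    using assms unfolding M_def by (auto intro: Max_in)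
  then obtain N where "M = Suc N"
    using assms by (metis gr0_conv_Suc le_0_eq not_gr0)
  define i where "i = Max {k\<in>{1..r}. f k = M}"
  have "finite {k\<in>{1..r}. f k = M}" "{k\<in>{1..r}. f k = M} \<noteq> {}"
    using M(1) by auto
  then have "i \<in> {k\<in>{1..r}. f k = M}" "\<forall>k\<in>{k\<in>{1..r}. f k = M}. k \<le> i"
    unfolding i_def by (rule Max_in, simp)
  moreover have "f k \<noteq> M" if "i < k" "k \<le> r" for k
    using that calculation by (metis (mono_tags, lifting) atLeastAtMost_iff le_trans less_imp_le_nat
        mem_Collect_eq not_le)
  ultimately show ?thesis
    using that[of i N] \<open>M = Suc N\<close> M(2) by auto
qed

lemma s_tilde_eq_det_jt_matrix:
  assumes "is_partition_atmost lam r" "is_partition_atmost mu r" "\<forall>k. mu k \<le> lam k" "flag_compatible r lam f"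
  shows "s_tilde lam mu f z b = det (jt_matrix z b r (shifted_parts lam) f (shifted_parts mu))"
  using assms
proof (induction "\<Sum>k\<in>{1..r}. f k" arbitrary: lam f rule: less_induct)
  case less
  show ?case
  proof (cases "\<forall>k\<in>{1..r}. f k = 0")
    case True
    then show ?thesis
      using less.prems s_tilde_eq_det_jt_matrix_if_flag_zero by blast
  next
    case False
    then obtain i N where i: "1 \<le> i" "i \<le> r" "f i = Suc N" "\<forall>k\<in>{1..r}. f k \<le> Suc N"
      "\<forall>k. i < k \<and> k \<le> r \<longrightarrow> f k \<noteq> Suc N"
      using obtain_last_row_of_max by blast
    have "(\<Sum>k\<in>{1..r}. (f(i := N)) k) < (\<Sum>k\<in>{1..r}. f k)"
      using i(1-3) sum.remove[of "{1..r}" i f] sum.remove[of "{1..r}" i "f(i := N)"] by simp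
    from less.hyps[OF this _ less.prems(2)] show ?thesis
      by (rule s_tilde_eq_det_jt_matrix_step[OF less.prems i])
  qed
qed

theorem mainTheorem11:
  fixes lam mu f :: "nat \<Rightarrow> nat" and r :: nat
    and z :: "nat \<Rightarrow> 'a::comm_ring_1" and b :: "int \<Rightarrow> 'a"
  assumes "is_partition_len lam r"
    and "is_partition_atmost mu r"
    and "\<forall>i. mu i \<le> lam i"
    and "\<forall>i j. 1 \<le> i \<and> i < j \<and> j \<le> r \<longrightarrow>
           int (lam i) - int i - int (f i) \<ge> int (lam j) - int j - int (f j)"
  shows "s_tilde lam mu f z b =
    det (mat r r (\<lambda>(i, j).
      e_kl (int (f (Suc i)))
           (int (lam (Suc i)) - int (mu (Suc j)) + int (Suc j) - int (Suc i) - int (f (Suc i)) - 1)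
           (int (lam (Suc i)) - int (mu (Suc j)) + int (Suc j) - int (Suc i))
           z (tau (int (Suc j) - int (mu (Suc j)) - 1) b)))"
proof -
  have "is_partition_atmost lam r"
    using assms(1) by (simp add: is_partition_len_def is_partition_atmost_def)
  then have "s_tilde lam mu f z b = det (jt_matrix z b r (shifted_parts lam) f (shifted_parts mu))"
    using assms(2-4) by (intro s_tilde_eq_det_jt_matrix) (simp_all add: flag_compatible_def)
  also have "jt_matrix z b r (shifted_parts lam) f (shifted_parts mu) = mat r r (\<lambda>(i, j).
      e_kl (int (f (Suc i)))
           (int (lam (Suc i)) - int (mu (Suc j)) + int (Suc j) - int (Suc i) - int (f (Suc i)) - 1)
           (int (lam (Suc i)) - int (mu (Suc j)) + int (Suc j) - int (Suc i))
           z (tau (int (Suc j) - int (mu (Suc j)) - 1) b))"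
    unfolding jt_matrix_def jt_entry_def shifted_parts_def
    by (intro arg_cong[where f = "mat r r"] ext) (simp split: prod.split add: algebra_simps)
  finally show ?thesis .
qed

end
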